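(* Let $u(x,t)$ be a smooth solution of the Rosenau equation $$u_t + u_{xxxxt} + u_x + u u_x = 0,\qquad t>0,$$ which is $L$-periodic in $x$ for some $L>0$. Then the quantity $$\int_0^L \Big(\frac{1}{3}u^3 + u^2\Big)\,\mathrm{d}x$$ is independent of $t$.
   Context: All functions are smooth in $(x,t)$ and $L$-periodic in the spatial variable $x$, so boundary terms from integration by parts over one period vanish. Subscripts denote partial derivatives. *)

theory Defs
  imports "HOL-Analysis.Analysis"
begin

definition Dx :: "(real \<times> real \<Rightarrow> real) \<Rightarrow> real \<times> real \<Rightarrow> real" where
  "Dx f = (\<lambda>p. deriv (\<lambda>y. f (y, snd p)) (fst p))"

definition Dt :: "(real \<times> real \<Rightarrow> real) \<Rightarrow> real \<times> real \<Rightarrow> real" where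
  "Dt f = (\<lambda>p. deriv (\<lambda>s. f (fst p, s)) (snd p))"

text \<open>Iterated partial derivative: True = d/dx, False = d/dt (applied from the head of the list).\<close>
fun Dseq :: "bool list \<Rightarrow> (real \<times> real \<Rightarrow> real) \<Rightarrow> real \<times> real \<Rightarrow> real" where
  "Dseq [] f = f"
| "Dseq (b # bs) f = Dseq bs (if b then Dx f else Dt f)"

definition smooth_on2 :: "(real \<times> real) set \<Rightarrow> (real \<times> real \<Rightarrow> real) \<Rightarrow> bool" where
  "smooth_on2 S f \<longleftrightarrow> (\<forall>ds. Dseq ds f differentiable_on S \<and> continuous_on S (Dseq ds f))"

end

(* With K = u_xxxt + u + u^2/2 the Rosenau equation reads K_x = -u_t. Hence
   (u^2 + 2u) u_t = 2 (K - u_xxxt) u_t is the x-derivative of the flux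
   u_xt^2 - 2 u_xxt u_t - K^2, which is L-periodic, so the time derivative of the integral
   of u^3/3 + u^2 over a period, obtained by differentiating under the integral sign,
   vanishes. The symmetry of the mixed partials, needed to identify the x-derivatives of
   u_t with the t-derivatives of u_x, u_xx, u_xxx, follows from the fundamental theorem
   of calculus and the Leibniz rule. *)

theory Submission
  imports Defs
begin

definition periodic_in_x :: "real \<Rightarrow> real set \<Rightarrow> (real \<times> real \<Rightarrow> real) \<Rightarrow> bool" where
  "periodic_in_x L T g \<longleftrightarrow> (\<forall>x. \<forall>t\<in>T. g (x + L, t) = g (x, t))"

lemma smooth_on2_Dx: "smooth_on2 S g \<Longrightarrow> smooth_on2 S (Dx g)"
  unfolding smooth_on2_def by (metis Dseq.simps(2))

lemma smooth_on2_Dt: "smooth_on2 S g \<Longrightarrow> smooth_on2 S (Dt g)"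
  unfolding smooth_on2_def by (metis Dseq.simps(2))

lemma smooth_on2_funpow_Dx: "smooth_on2 S g \<Longrightarrow> smooth_on2 S ((Dx ^^ k) g)"
  by (induction k) (simp_all add: smooth_on2_Dx)

lemma smooth_on2_imp_continuous_on: "smooth_on2 S g \<Longrightarrow> continuous_on S g"
  unfolding smooth_on2_def by (metis Dseq.simps(1))

lemma smooth_on2_imp_differentiable_at:
  assumes "smooth_on2 S g" "open S" "p \<in> S"
  shows "g differentiable (at p)"
proof -
  have "g differentiable_on S"
    using assms(1) unfolding smooth_on2_def by (metis Dseq.simps(1))
  then show ?thesis
    using assms(2,3) by (simp add: differentiable_on_eq_differentiable_at)
qed

lemma has_real_derivative_Dx:
  assumes "g differentiable (at (x, t))"
  shows "((\<lambda>y. g (y, t)) has_real_derivative Dx g (x, t)) (at x)"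
proof -
  have "(g \<circ> (\<lambda>y. (y, t))) differentiable (at x)"
    using assms by (intro differentiable_chain_at derivative_intros) auto
  then show ?thesis
    unfolding Dx_def by (simp add: o_def DERIV_deriv_iff_real_differentiable)
qed

lemma has_real_derivative_Dt:
  assumes "g differentiable (at (x, t))"
  shows "((\<lambda>s. g (x, s)) has_real_derivative Dt g (x, t)) (at t)"
proof -
  have "(g \<circ> (\<lambda>s. (x, s))) differentiable (at t)"
    using assms by (intro differentiable_chain_at derivative_intros) auto
  then show ?thesis
    unfolding Dt_def by (simp add: o_def DERIV_deriv_iff_real_differentiable)
qed

lemma smooth_on2_strip_has_real_derivative_Dx:
  assumes "smooth_on2 (UNIV \<times> T) g" "open T" "t \<in> T"
  shows "((\<lambda>y. g (y, t)) has_real_derivative Dx g (x, t)) (at x)"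
  using assms by (intro has_real_derivative_Dx smooth_on2_imp_differentiable_at) (auto simp: open_Times)

lemma smooth_on2_strip_has_real_derivative_Dt:
  assumes "smooth_on2 (UNIV \<times> T) g" "open T" "t \<in> T"
  shows "((\<lambda>s. g (x, s)) has_real_derivative Dt g (x, t)) (at t)"
  using assms by (intro has_real_derivative_Dt smooth_on2_imp_differentiable_at) (auto simp: open_Times)

lemma periodic_in_x_Dx:
  assumes g: "smooth_on2 (UNIV \<times> T) g" "open T" and p: "periodic_in_x L T g"
  shows "periodic_in_x L T (Dx g)"
  unfolding periodic_in_x_def
proof (intro allI ballI)
  fix x t assume t: "t \<in> T"
  have "(\<lambda>y. g (y + L, t)) = (\<lambda>y. g (y, t))"
    using p t unfolding periodic_in_x_def by auto
  moreover have "((\<lambda>y. g (y + L, t)) has_real_derivative Dx g (x + L, t)) (at x)"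
    using smooth_on2_strip_has_real_derivative_Dx[OF g t, of "x + L"] by (simp add: DERIV_shift)
  ultimately show "Dx g (x + L, t) = Dx g (x, t)"
    using smooth_on2_strip_has_real_derivative_Dx[OF g t, of x] DERIV_unique by metis
qed

lemma periodic_in_x_funpow_Dx:
  assumes "smooth_on2 (UNIV \<times> T) g" "open T" "periodic_in_x L T g"
  shows "periodic_in_x L T ((Dx ^^ k) g)"
  by (induction k) (simp_all add: assms periodic_in_x_Dx smooth_on2_funpow_Dx)

lemma periodic_in_x_Dt:
  assumes g: "smooth_on2 (UNIV \<times> T) g" "open T" and p: "periodic_in_x L T g"
  shows "periodic_in_x L T (Dt g)"
  unfolding periodic_in_x_def
proof (intro allI ballI)
  fix x t assume t: "t \<in> T"
  have "((\<lambda>s. g (x, s)) has_real_derivative Dt g (x + L, t)) (at t)"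
    using smooth_on2_strip_has_real_derivative_Dt[OF g t, of "x + L"]
    by (rule has_field_derivative_transform_within_open[where S = T])
       (use t p g(2) in \<open>auto simp: periodic_in_x_def\<close>)
  then show "Dt g (x + L, t) = Dt g (x, t)"
    using smooth_on2_strip_has_real_derivative_Dt[OF g t, of x] DERIV_unique by metis
qed

lemma continuous_on_slice:
  assumes "continuous_on (UNIV \<times> T) h" "t \<in> T"
  shows "continuous_on A (\<lambda>x. h (x, t))"
  by (rule continuous_on_compose2[OF assms(1)]) (use assms(2) in \<open>auto intro!: continuous_intros\<close>)

lemma has_real_derivative_integral_slice:
  fixes h h' :: "real \<times> real \<Rightarrow> real"
  assumes T: "open T" "convex T" "t \<in> T"
    and h: "continuous_on (UNIV \<times> T) h" and h': "continuous_on (UNIV \<times> T) h'"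
    and deriv: "\<And>x s. s \<in> T \<Longrightarrow> ((\<lambda>s. h (x, s)) has_real_derivative h' (x, s)) (at s)"
  shows "((\<lambda>s. integral {a..b} (\<lambda>x. h (x, s))) has_real_derivative
           integral {a..b} (\<lambda>x. h' (x, t))) (at t)"
proof -
  have "((\<lambda>s. integral (cbox a b) (\<lambda>x. h (x, s))) has_real_derivative
          integral (cbox a b) (\<lambda>x. h' (x, t))) (at t within T)"
  proof (rule leibniz_rule_field_derivative[where fx = "\<lambda>s x. h' (x, s)"])
    show "((\<lambda>s. h (x, s)) has_real_derivative h' (x, s)) (at s within T)" if "s \<in> T" for s x
      using deriv[OF that] by (rule has_field_derivative_at_within)
    show "(\<lambda>x. h (x, s)) integrable_on cbox a b" if "s \<in> T" for s
      using continuous_on_slice[OF h that] by (simp add: integrable_continuous_interval)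
    have "continuous_on (T \<times> cbox a b) (\<lambda>p. h' (snd p, fst p))"
      by (rule continuous_on_compose2[OF h']) (auto intro!: continuous_intros)
    then show "continuous_on (T \<times> cbox a b) (\<lambda>(s, x). h' (x, s))"
      by (simp add: case_prod_beta)
  qed (use T in auto)
  then show ?thesis
    using at_within_open[OF T(3,1)] by (simp add: cbox_interval)
qed

lemma slice_diff_eq_integral_Dx:
  assumes g: "smooth_on2 (UNIV \<times> T) g" "open T" "t \<in> T" and "a \<le> y"
  shows "g (y, t) - g (a, t) = integral {a..y} (\<lambda>x. Dx g (x, t))"
proof -
  have "((\<lambda>x. Dx g (x, t)) has_integral (g (y, t) - g (a, t))) {a..y}"
    using \<open>a \<le> y\<close> smooth_on2_strip_has_real_derivative_Dx[OF g]
    by (intro fundamental_theorem_of_calculus)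
       (auto simp: has_real_derivative_iff_has_vector_derivative[symmetric] intro: has_field_derivative_at_within)
  then show ?thesis
    by (simp add: integral_unique)
qed

lemma Dx_Dt_eq_Dt_Dx:
  assumes g: "smooth_on2 (UNIV \<times> T) g" and T: "open T" "convex T" "t \<in> T"
  shows "Dx (Dt g) (x, t) = Dt (Dx g) (x, t)"
proof -
  define a where "a = x - 1"
  let ?k = "\<lambda>y. Dt (Dx g) (y, t)"
  have gx: "smooth_on2 (UNIV \<times> T) (Dx g)"
    using g by (rule smooth_on2_Dx)
  have Dt_diff: "Dt g (y, t) - Dt g (a, t) = integral {a..y} ?k" if "a \<le> y" for y
  proof -
    have "((\<lambda>s. g (y, s) - g (a, s)) has_real_derivative Dt g (y, t) - Dt g (a, t)) (at t)"
      by (intro DERIV_diff smooth_on2_strip_has_real_derivative_Dt[OF g T(1,3)])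
    then have "((\<lambda>s. integral {a..y} (\<lambda>x. Dx g (x, s))) has_real_derivative
                 Dt g (y, t) - Dt g (a, t)) (at t)"
      by (rule has_field_derivative_transform_within_open[where S = T])
         (use T that slice_diff_eq_integral_Dx[OF g T(1)] in auto)
    moreover have "((\<lambda>s. integral {a..y} (\<lambda>x. Dx g (x, s))) has_real_derivative
                     integral {a..y} ?k) (at t)"
      using T smooth_on2_imp_continuous_on[OF gx] smooth_on2_imp_continuous_on[OF smooth_on2_Dt[OF gx]]
        smooth_on2_strip_has_real_derivative_Dt[OF gx T(1)]
      by (rule has_real_derivative_integral_slice)
    ultimately show ?thesis
      by (rule DERIV_unique)
  qed
  have "((\<lambda>y. integral {a..y} ?k) has_real_derivative ?k x) (at x within {a..x + 1})"
    using smooth_on2_imp_continuous_on[OF smooth_on2_Dt[OF gx]] T(3)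
    by (intro integral_has_real_derivative continuous_on_slice) (auto simp: a_def)
  then have "((\<lambda>y. integral {a..y} ?k) has_real_derivative ?k x) (at x)"
    by (simp add: at_within_Icc_at a_def)
  from DERIV_add[OF DERIV_const this]
  have "((\<lambda>y. Dt g (a, t) + integral {a..y} ?k) has_real_derivative ?k x) (at x)"
    by simp
  then have "((\<lambda>y. Dt g (y, t)) has_real_derivative ?k x) (at x)"
  proof (rule has_field_derivative_transform_within_open[where S = "{a<..}"])
    show "Dt g (a, t) + integral {a..y} ?k = Dt g (y, t)" if "y \<in> {a<..}" for y
      using Dt_diff[of y] that by simp
  qed (simp_all add: a_def)
  then show ?thesis
    using smooth_on2_strip_has_real_derivative_Dx[OF smooth_on2_Dt[OF g] T(1,3)] DERIV_unique by metis
qed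

lemma rosenau_flux_has_real_derivative:
  fixes w v v1 v2 v3 :: "real \<Rightarrow> real"
  assumes w: "(w has_real_derivative w') (at x)"
    and v: "(v has_real_derivative v1 x) (at x)"
    and v1: "(v1 has_real_derivative v2 x) (at x)"
    and v2: "(v2 has_real_derivative v3 x) (at x)"
    and v3: "(v3 has_real_derivative - (v x + w' + w x * w')) (at x)"
  shows "((\<lambda>x. v1 x ^ 2 - 2 * v2 x * v x - (v3 x + w x + w x ^ 2 / 2) ^ 2)
           has_real_derivative (w x ^ 2 + 2 * w x) * v x) (at x)"
proof -
  have K: "((\<lambda>x. v3 x + w x + w x ^ 2 / 2) has_real_derivative - v x) (at x)"
    by (rule DERIV_cong[OF DERIV_add[OF DERIV_add[OF v3 w] DERIV_cdivide[OF DERIV_power[OF w]]]])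
       (simp add: algebra_simps)
  show ?thesis
    by (rule DERIV_cong[OF DERIV_diff[OF DERIV_diff[OF DERIV_power[OF v1]
          DERIV_mult[OF DERIV_cmult[OF v2] v]] DERIV_power[OF K]]])
       (simp add: algebra_simps power2_eq_square)
qed

lemma integral_eq_0_if_antiderivative_eq:
  fixes f F :: "real \<Rightarrow> real"
  assumes "a \<le> b" "\<And>x. (F has_real_derivative f x) (at x)" "F b = F a"
  shows "integral {a..b} f = 0"
proof -
  have "(f has_integral F b - F a) {a..b}"
    using assms(1,2)
    by (intro fundamental_theorem_of_calculus)
       (auto simp: has_real_derivative_iff_has_vector_derivative[symmetric] intro: has_field_derivative_at_within)
  then show ?thesis
    using assms(3) by (simp add: integral_unique)
qed

lemma rosenau_integral_energy_rate_eq_0: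
  fixes u :: "real \<times> real \<Rightarrow> real"
  assumes T: "open T" "convex T" "t \<in> T" and "0 \<le> L"
    and smooth: "smooth_on2 (UNIV \<times> T) u"
    and periodic: "periodic_in_x L T u"
    and rosenau: "\<And>x t. t \<in> T \<Longrightarrow>
        Dt u (x, t) + Dt (Dx (Dx (Dx (Dx u)))) (x, t) + Dx u (x, t) + u (x, t) * Dx u (x, t) = 0"
  shows "integral {0..L} (\<lambda>x. (u (x, t) ^ 2 + 2 * u (x, t)) * Dt u (x, t)) = 0"
proof -
  define v where "v k = (\<lambda>x. Dt ((Dx ^^ k) u) (x, t))" for k
  have smooth_k: "smooth_on2 (UNIV \<times> T) ((Dx ^^ k) u)" for k
    using smooth by (rule smooth_on2_funpow_Dx)
  have dv: "(v k has_real_derivative v (Suc k) x) (at x)" for k x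
    using smooth_on2_strip_has_real_derivative_Dx[OF smooth_on2_Dt[OF smooth_k] T(1,3)]
      Dx_Dt_eq_Dt_Dx[OF smooth_k T]
    by (simp add: v_def)
  have "v 4 x = - (v 0 x + Dx u (x, t) + u (x, t) * Dx u (x, t))" for x
    using rosenau[OF T(3), of x] by (simp add: v_def eval_nat_numeral)
  then have dv3: "(v 3 has_real_derivative - (v 0 x + Dx u (x, t) + u (x, t) * Dx u (x, t))) (at x)" for x
    using dv[of 3 x] by (simp add: eval_nat_numeral)
  have dv012: "(v 0 has_real_derivative v 1 x) (at x)" "(v 1 has_real_derivative v 2 x) (at x)"
    "(v 2 has_real_derivative v 3 x) (at x)" for x
    using dv[of 0 x] dv[of 1 x] dv[of 2 x] by (simp_all add: numeral_eq_Suc)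
  have dw: "((\<lambda>x. u (x, t)) has_real_derivative Dx u (x, t)) (at x)" for x
    using smooth T(1,3) by (rule smooth_on2_strip_has_real_derivative_Dx)
  have v_periodic: "v k L = v k 0" for k
    using periodic_in_x_Dt[OF smooth_k T(1) periodic_in_x_funpow_Dx[OF smooth T(1) periodic]] T(3)
    unfolding periodic_in_x_def v_def by (metis add_0)
  have u_periodic: "u (L, t) = u (0, t)"
    using periodic T(3) unfolding periodic_in_x_def by (metis add_0)
  define F where "F = (\<lambda>x. v 1 x ^ 2 - 2 * v 2 x * v 0 x - (v 3 x + u (x, t) + u (x, t) ^ 2 / 2) ^ 2)"
  have "(F has_real_derivative (u (x, t) ^ 2 + 2 * u (x, t)) * v 0 x) (at x)" for x
    unfolding F_def by (rule rosenau_flux_has_real_derivative[OF dw dv012 dv3])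
  moreover have "F L = F 0"
    by (simp add: F_def v_periodic u_periodic)
  ultimately have "integral {0..L} (\<lambda>x. (u (x, t) ^ 2 + 2 * u (x, t)) * v 0 x) = 0"
    by (rule integral_eq_0_if_antiderivative_eq[OF \<open>0 \<le> L\<close>])
  then show ?thesis
    by (simp add: v_def)
qed

theorem mainTheorem4:
  fixes u :: "real \<times> real \<Rightarrow> real" and L :: real
  assumes L_pos: "L > 0"
    and smooth: "smooth_on2 (UNIV \<times> {0<..}) u"
    and periodic: "\<And>x t. t > 0 \<Longrightarrow> u (x + L, t) = u (x, t)"
    and rosenau: "\<And>x t. t > 0 \<Longrightarrow>
        Dt u (x, t) + Dt (Dx (Dx (Dx (Dx u)))) (x, t) + Dx u (x, t) + u (x, t) * Dx u (x, t) = 0"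
    and t1: "t1 > 0" and t2: "t2 > 0"
  shows "integral {0..L} (\<lambda>x. (1/3) * u (x, t1) ^ 3 + u (x, t1) ^ 2)
       = integral {0..L} (\<lambda>x. (1/3) * u (x, t2) ^ 3 + u (x, t2) ^ 2)"
proof -
  let ?T = "{0<..} :: real set"
  define E where "E t = integral {0..L} (\<lambda>x. (1/3) * u (x, t) ^ 3 + u (x, t) ^ 2)" for t
  have T: "open ?T" "convex ?T"
    by (simp_all add: convex_real_interval)
  have cont: "continuous_on (UNIV \<times> ?T) u" "continuous_on (UNIV \<times> ?T) (Dt u)"
    using smooth by (simp_all add: smooth_on2_imp_continuous_on smooth_on2_Dt)
  have density_deriv: "((\<lambda>s. (1/3) * u (x, s) ^ 3 + u (x, s) ^ 2) has_real_derivative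
                          (u (x, s) ^ 2 + 2 * u (x, s)) * Dt u (x, s)) (at s)" if "s \<in> ?T" for x s
    using smooth_on2_strip_has_real_derivative_Dt[OF smooth T(1) that]
    by (auto intro!: derivative_eq_intros simp: algebra_simps power2_eq_square)
  have "(E has_real_derivative 0) (at t)" if "t \<in> ?T" for t
  proof -
    have "(E has_real_derivative integral {0..L} (\<lambda>x. (u (x, t) ^ 2 + 2 * u (x, t)) * Dt u (x, t))) (at t)"
      unfolding E_def
      by (rule has_real_derivative_integral_slice[where h = "\<lambda>p. (1/3) * u p ^ 3 + u p ^ 2"
            and h' = "\<lambda>p. (u p ^ 2 + 2 * u p) * Dt u p", OF T that _ _ density_deriv])
         (use cont in \<open>auto intro!: continuous_intros\<close>)
    moreover have "periodic_in_x L ?T u"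
      using periodic by (simp add: periodic_in_x_def)
    ultimately show ?thesis
      using rosenau_integral_energy_rate_eq_0[OF T that _ smooth] L_pos rosenau by simp
  qed
  then obtain c where "\<forall>t\<in>?T. E t = c"
    using has_field_derivative_zero_constant[OF T(2)] has_field_derivative_at_within by metis
  then show ?thesis
    using t1 t2 by (simp add: E_def)
qed

end
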